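(* For $k>3$ the Tanaka prolongation of the truncated double-graded free Lie algebra $\mathfrak{n}_k$ is supported in non-positive grading: $\hat{\mathfrak{n}}_k=\mathfrak{n}_k\oplus\mathfrak{g}_0$ with $\mathfrak{g}_0=\mathfrak{gl}(\mathfrak{g}_{-1})$.
   Context: The double-graded free Lie algebra with two-dimensional fundamental space is $\mathfrak{n}_\infty=\bigoplus_{i<0}\mathfrak{g}_i$ with $\mathfrak{g}_{-1}=\langle e_{10},e_{01}\rangle$, $e_{11}=[e_{10},e_{01}]$, and $\mathfrak{g}_{-j-1}=\langle e_{j,1},e_{j-1,2},\dots,e_{1,j}\rangle$, the only relations being $[e_{10},e_{i,j+1}]=[e_{01},e_{i+1,j}]=e_{i+1,j+1}$ (and $[e_{10},e_{i,j}]=e_{i+1,j}$, $[e_{01},e_{i,j}]=e_{i,j+1}$). The truncated algebra is $\mathfrak{n}_k=\mathfrak{g}_{-k}\oplus\dots\oplus\mathfrak{g}_{-1}$, with brackets between $\mathfrak{g}_{-i}$ and $\mathfrak{g}_{-j}$ zero when $i+j>k$. The Tanaka prolongation $\hat{\mathfrak{m}}=\bigoplus_i\mathfrak{g}_i$ of a fundamental graded nilpotent Lie algebra $\mathfrak{m}=\bigoplus_{i<0}\mathfrak{g}_i$ is the maximal graded Lie algebra whose negative part is $\mathfrak{m}$ and in which no nonzero element of non-negative degree commutes with all of $\mathfrak{g}_{-1}$; $\mathfrak{g}_0$ is the algebra of degree-zero derivations of $\mathfrak{m}$ (not required to preserve the splitting of $\mathfrak{g}_{-1}$), and $\mathfrak{g}_i$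 for $i>0$ is built successively. *)

theory Defs
  imports Main "HOL.Real"
begin

text \<open>An element of n_k is a coefficient function on index pairs (i,j); the basis
  vector e_ij has degree -(i+j).\<close>

type_synonym vec = "nat \<times> nat \<Rightarrow> real"

definition B :: "nat \<Rightarrow> (nat \<times> nat) set" where
  "B k = {(1,0),(0,1)} \<union> {(a,b). 1 \<le> a \<and> 1 \<le> b \<and> a + b \<le> k}"

text \<open>hom k n = the homogeneous component g_{-n} of n_k.\<close>
definition hom :: "nat \<Rightarrow> nat \<Rightarrow> vec set" where
  "hom k n = {v. \<forall>ij. v ij \<noteq> 0 \<longrightarrow> ij \<in> B k \<and> fst ij + snd ij = n}"

text \<open>The Lie bracket of n_k: [e10,e01] = e11, [e10,e_ab] = e_(a+1)b,
  [e01,e_ab] = e_a(b+1) (a,b>=1), all other brackets of basis vectors zero,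
  and everything of degree below -k truncated.\<close>
definition br :: "nat \<Rightarrow> vec \<Rightarrow> vec \<Rightarrow> vec" where
  "br k u v = (\<lambda>(i,j). if 1 \<le> i \<and> 1 \<le> j \<and> i + j \<le> k then
      (u (1,0) * v (i - 1, j) - v (1,0) * u (i - 1, j))
      + (if 2 \<le> j then u (0,1) * v (i, j - 1) - v (0,1) * u (i, j - 1) else 0)
    else 0)"

text \<open>Neg u is an element u of n_k;
  Der p f is an element of non-negative degree p, given by its graded action
  f i : g_{-i} \<rightarrow> (component of degree p - i), i = 1..k (values outside this
  domain are irrelevant).\<close>
datatype pe = Neg vec | Der nat "nat \<Rightarrow> vec \<Rightarrow> pe"

primrec padd :: "pe \<Rightarrow> pe \<Rightarrow> pe" where
  "padd (Neg u) Y = (case Y of Neg v \<Rightarrow> Neg (\<lambda>ij. u ij + v ij) | Der q g \<Rightarrow> Neg (\<lambda>_. 1))"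
| "padd (Der p f) Y = (case Y of Neg v \<Rightarrow> Neg (\<lambda>_. 1)
      | Der q g \<Rightarrow> (if p = q then Der p (\<lambda>i x. padd (f i x) (g i x)) else Neg (\<lambda>_. 1)))"

primrec psmul :: "real \<Rightarrow> pe \<Rightarrow> pe" where
  "psmul c (Neg u) = Neg (\<lambda>ij. c * u ij)"
| "psmul c (Der p f) = Der p (\<lambda>i x. psmul c (f i x))"

primrec is_zero :: "nat \<Rightarrow> pe \<Rightarrow> bool" where
  "is_zero k (Neg u) = (u = (\<lambda>_. 0))"
| "is_zero k (Der p f) = (\<forall>i\<in>{1..k}. \<forall>x\<in>hom k i. is_zero k (f i x))"

definition peq :: "nat \<Rightarrow> pe \<Rightarrow> pe \<Rightarrow> bool" where
  "peq k a b = is_zero k (padd a (psmul (-1) b))"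

text \<open>act k X j y = [X, y] for y in g_{-j}.\<close>
definition act :: "nat \<Rightarrow> pe \<Rightarrow> nat \<Rightarrow> vec \<Rightarrow> pe" where
  "act k X j y = (case X of Neg u \<Rightarrow> Neg (br k u y) | Der p f \<Rightarrow> f j y)"

definition lin_cond :: "nat \<Rightarrow> (nat \<Rightarrow> vec \<Rightarrow> pe) \<Rightarrow> bool" where
  "lin_cond k f = (\<forall>i\<in>{1..k}. \<forall>x\<in>hom k i. \<forall>y\<in>hom k i. \<forall>a b.
     peq k (f i (\<lambda>ij. a * x ij + b * y ij)) (padd (psmul a (f i x)) (psmul b (f i y))))"

definition leib_cond :: "nat \<Rightarrow> (nat \<Rightarrow> vec \<Rightarrow> pe) \<Rightarrow> bool" where
  "leib_cond k f = (\<forall>i\<in>{1..k}. \<forall>j\<in>{1..k}. \<forall>x\<in>hom k i. \<forall>y\<in>hom k j.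
     (let s = padd (act k (f i x) j y) (psmul (-1) (act k (f j y) i x)) in
       if i + j \<le> k then peq k (f (i + j) (br k x y)) s else is_zero k s))"

text \<open>inG k X d: X is an element of the degree-d component of the Tanaka
  prolongation of n_k (d < 0: the component g_d of n_k; d = p >= 0: the
  successively built component g_p).\<close>
primrec inG :: "nat \<Rightarrow> pe \<Rightarrow> int \<Rightarrow> bool" where
  "inG k (Neg u) d = (d < 0 \<and> u \<in> hom k (nat (- d)))"
| "inG k (Der p f) d = (d = int p
      \<and> (\<forall>i\<in>{1..k}. \<forall>x\<in>hom k i. inG k (f i x) (d - int i))
      \<and> lin_cond k f \<and> leib_cond k f)"

definition endo1 :: "nat \<Rightarrow> (vec \<Rightarrow> vec) \<Rightarrow> bool" where
  "endo1 k A = ((\<forall>x\<in>hom k 1. A x \<in> hom k 1) \<and>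
     (\<forall>x\<in>hom k 1. \<forall>y\<in>hom k 1. \<forall>a b. A (\<lambda>ij. a * x ij + b * y ij) = (\<lambda>ij. a * A x ij + b * A y ij)))"

end

(*
  An element of non-negative degree of the prolongation is determined by its action on
  g_-1, because g_-1 generates n_k and the action satisfies the Leibniz rule.  In degree 0
  every endomorphism of g_-1 extends to an explicit derivation of n_k, so g_0 = gl(g_-1).
  In degree 1 an element f is given by the two matrices of f(e_10), f(e_01) in g_0.  The
  relation [e_11, e_12] = 0 gives f(e_11) = 0, the Leibniz rule along the chains
  e_n1 = [e_10, e_(n-1)1] and e_1n = [e_01, e_1(n-1)] determines f there in closed form, and
  the truncation of brackets landing in degree -(k+1) then yields linear equations that,
  for k >= 4, force both matrices to vanish.  Hence g_1 = 0, and inductively g_p = 0 for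
  all p >= 1.
*)

theory Submission
  imports Defs
begin

section \<open>Linear structure of prolongation elements\<close>

lemma psmul_one [simp]: "psmul 1 X = X"
  by (induction X) (auto simp: fun_eq_iff)

lemma peq_refl: "peq k X X"
  unfolding peq_def by (induction X) (auto simp: fun_eq_iff)

lemma peq_sym: "peq k X Y \<Longrightarrow> peq k Y X"
  unfolding peq_def
proof (induction X arbitrary: Y)
  case (Neg u) then show ?case by (cases Y) (auto simp: fun_eq_iff)
next
  case (Der p f)
  then obtain g where Y: "Y = Der p g" by (cases Y) (auto simp: fun_eq_iff split: if_splits)
  show ?case using Der.prems unfolding Y by (simp, meson Der.IH rangeI)
qed

lemma peq_trans: "peq k X Y \<Longrightarrow> peq k Y Z \<Longrightarrow> peq k X Z"
  unfolding peq_def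
proof (induction X arbitrary: Y Z)
  case (Neg u) then show ?case by (cases Y; cases Z) (auto simp: fun_eq_iff)
next
  case (Der p f)
  then obtain g where Y: "Y = Der p g" by (cases Y) (auto simp: fun_eq_iff split: if_splits)
  with Der obtain h where Z: "Z = Der p h" by (cases Z) (auto simp: fun_eq_iff split: if_splits)
  show ?case using Der.prems unfolding Y Z by (simp, meson Der.IH rangeI)
qed

lemma peq_Neg [simp]: "peq k (Neg u) (Neg v) \<longleftrightarrow> u = v"
  unfolding peq_def by (auto simp: fun_eq_iff)

lemma peq_is_zero: "peq k X Y \<Longrightarrow> is_zero k Y \<Longrightarrow> is_zero k X"
  unfolding peq_def
proof (induction X arbitrary: Y)
  case (Neg u) then show ?case by (cases Y) (auto simp: fun_eq_iff)
next
  case (Der p f)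
  then obtain g where Y: "Y = Der p g" by (cases Y) (auto simp: fun_eq_iff split: if_splits)
  show ?case using Der.prems unfolding Y by (simp, meson Der.IH rangeI)
qed

text \<open>The degree hypotheses make the shapes of the summands agree; \<open>padd\<close> of elements of
  different shape is a junk value.\<close>

lemma is_zero_lincomb:
  "inG k X d \<Longrightarrow> inG k Y d \<Longrightarrow> is_zero k X \<Longrightarrow> is_zero k Y
   \<Longrightarrow> is_zero k (padd (psmul s X) (psmul t Y))"
proof (induction X arbitrary: Y d)
  case (Neg u) then show ?case by (cases Y) auto
next
  case (Der p f)
  then obtain g where Y: "Y = Der p g" by (cases Y) auto
  show ?case using Der.prems unfolding Y by (simp, meson Der.IH rangeI)
qed

lemma peq_lincomb:
  "inG k X d \<Longrightarrow> inG k Y d \<Longrightarrow> peq k X X' \<Longrightarrow> peq k Y Y'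
   \<Longrightarrow> peq k (padd (psmul s X) (psmul t Y)) (padd (psmul s X') (psmul t Y'))"
  unfolding peq_def
proof (induction X arbitrary: Y d X' Y')
  case (Neg u) then show ?case
    by (cases Y; cases X'; cases Y') (auto simp: fun_eq_iff algebra_simps)
next
  case (Der p f)
  then obtain g where Y: "Y = Der p g" by (cases Y) auto
  with Der obtain f' where X': "X' = Der p f'" by (cases X') (auto simp: fun_eq_iff split: if_splits)
  with Der Y obtain g' where Y': "Y' = Der p g'" by (cases Y') (auto simp: fun_eq_iff split: if_splits)
  show ?case using Der.prems unfolding Y X' Y' by (simp, meson Der.IH rangeI)
qed

section \<open>The graded algebra \<open>n_k\<close>\<close>

lemma B_mem [simp]:
  "(p,q) \<in> B k \<longleftrightarrow> (p = 1 \<and> q = 0) \<or> (p = 0 \<and> q = 1) \<or> (1 \<le> p \<and> 1 \<le> q \<and> p + q \<le> k)"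
  by (auto simp: B_def)

lemma homD: "v \<in> hom k n \<Longrightarrow> v (p,q) \<noteq> 0 \<Longrightarrow> (p,q) \<in> B k \<and> p + q = n"
  unfolding hom_def by force

lemma hom_eq_zero: "v \<in> hom k n \<Longrightarrow> \<not> ((p,q) \<in> B k \<and> p + q = n) \<Longrightarrow> v (p,q) = 0"
  using homD by blast

lemma homI: "(\<And>p q. v (p,q) \<noteq> 0 \<Longrightarrow> (p,q) \<in> B k \<and> p + q = n) \<Longrightarrow> v \<in> hom k n"
  unfolding hom_def by auto

lemma hom_zero [simp]: "(\<lambda>_. 0) \<in> hom k n"
  by (rule homI) auto

lemma hom_lincomb: "x \<in> hom k n \<Longrightarrow> y \<in> hom k n \<Longrightarrow> (\<lambda>ij. a * x ij + b * y ij) \<in> hom k n"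
proof (rule homI)
  fix p q assume "x \<in> hom k n" "y \<in> hom k n" "a * x (p,q) + b * y (p,q) \<noteq> 0"
  then show "(p,q) \<in> B k \<and> p + q = n"
    by (metis homD add_0 mult_zero_right)
qed

lemma hom_above_k: "v \<in> hom k n \<Longrightarrow> k < n \<Longrightarrow> 1 \<le> k \<Longrightarrow> v = (\<lambda>_. 0)"
proof (rule ext, clarify)
  fix p q assume "v \<in> hom k n" "k < n" "1 \<le> k"
  then show "v (p,q) = 0"
    using homD[of v k n p q] by (cases "v (p,q) = 0") auto
qed

definition E :: "nat \<Rightarrow> nat \<Rightarrow> vec" where
  "E p q = (\<lambda>ij. if ij = (p,q) then 1 else 0)"

lemma E_apply [simp]: "E p q (a,b) = (if a = p \<and> b = q then 1 else 0)"
  by (auto simp: E_def)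

lemma E_hom: "(p,q) \<in> B k \<Longrightarrow> E p q \<in> hom k (p + q)"
  by (rule homI) (auto split: if_splits)

lemma E10_hom: "E 1 0 \<in> hom k 1" and E01_hom: "E 0 1 \<in> hom k 1"
  using E_hom[of 1 0 k] E_hom[of 0 1 k] by simp_all

lemma hom1_eq_lincomb_E: "x \<in> hom k 1 \<Longrightarrow> x = (\<lambda>ij. x (1,0) * E 1 0 ij + x (0,1) * E 0 1 ij)"
proof (rule ext, clarify)
  fix p q assume "x \<in> hom k 1"
  then show "x (p,q) = x (1,0) * E 1 0 (p,q) + x (0,1) * E 0 1 (p,q)"
    using hom_eq_zero[of x k 1 p q] by auto
qed

lemma br_apply:
  "br k u v (i,j) = (if 1 \<le> i \<and> 1 \<le> j \<and> i + j \<le> k then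
      (u (1,0) * v (i - 1, j) - v (1,0) * u (i - 1, j))
      + (if 2 \<le> j then u (0,1) * v (i, j - 1) - v (0,1) * u (i, j - 1) else 0)
    else 0)"
  by (simp add: br_def)

lemma br_hom: "u \<in> hom k i \<Longrightarrow> v \<in> hom k j \<Longrightarrow> br k u v \<in> hom k (i + j)"
proof (rule homI)
  fix p q assume u: "u \<in> hom k i" and v: "v \<in> hom k j" and ne: "br k u v (p,q) \<noteq> 0"
  from ne have r: "1 \<le> p \<and> 1 \<le> q \<and> p + q \<le> k" by (auto simp: br_apply split: if_splits)
  have "p + q = i + j"
  proof (rule ccontr)
    assume deg: "p + q \<noteq> i + j"
    note hu = homD[OF u] and hv = homD[OF v]
    have "u (1,0) * v (p-1,q) = 0" "v (1,0) * u (p-1,q) = 0"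
      using hu[of 1 0] hv[of "p-1" q] hv[of 1 0] hu[of "p-1" q] r deg by force+
    moreover have "2 \<le> q \<Longrightarrow> u (0,1) * v (p,q-1) = 0" "2 \<le> q \<Longrightarrow> v (0,1) * u (p,q-1) = 0"
      using hu[of 0 1] hv[of p "q-1"] hv[of 0 1] hu[of p "q-1"] r deg by force+
    ultimately have "br k u v (p,q) = 0" by (simp add: br_apply del: mult_eq_0_iff)
    with ne show False by simp
  qed
  with r show "(p,q) \<in> B k \<and> p + q = i + j" by auto
qed

lemma br_above_k: "u \<in> hom k i \<Longrightarrow> v \<in> hom k j \<Longrightarrow> k < i + j \<Longrightarrow> 1 \<le> k \<Longrightarrow> br k u v = (\<lambda>_. 0)"
  using br_hom hom_above_k by blast

lemma br_deg_ge2_zero: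
  assumes u: "u \<in> hom k i" and v: "v \<in> hom k j" and "2 \<le> i" "2 \<le> j"
  shows "br k u v = (\<lambda>_. 0)"
proof -
  have "u (1,0) = 0" "u (0,1) = 0" "v (1,0) = 0" "v (0,1) = 0"
    using hom_eq_zero[OF u] hom_eq_zero[OF v] assms by auto
  then show ?thesis by (simp add: fun_eq_iff br_apply)
qed

lemma br_zero_left [simp]: "br k (\<lambda>_. 0) v = (\<lambda>_. 0)"
  by (auto simp: br_def fun_eq_iff)

lemma br_antisym: "br k u v = (\<lambda>ij. - br k v u ij)"
  by (auto simp: br_def fun_eq_iff)

lemma hom_generated_by_hom1:
  assumes i: "2 \<le> i" and x: "x \<in> hom k i"
  obtains y z where "y \<in> hom k (i - 1)" "z \<in> hom k (i - 1)"
    "x = (\<lambda>ij. br k (E 1 0) y ij + br k (E 0 1) z ij)"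
proof -
  txt \<open>Every \<open>e_pq\<close> with \<open>p \<ge> 2\<close> is \<open>[e_10, e_(p-1)q]\<close>; the rest, \<open>e_1q\<close>, is
    \<open>[e_01, e_1(q-1)]\<close>, except \<open>e_11 = [e_10, e_01]\<close>.\<close>
  define y :: vec where
    "y = (\<lambda>(p,q). if p \<ge> 1 then x (p+1,q) else if q = 1 then x (1,1) else 0)"
  define z :: vec where "z = (\<lambda>(p,q). if p = 1 \<and> q \<ge> 1 then x (1,q+1) else 0)"
  have "y \<in> hom k (i - 1)"
  proof (rule homI)
    fix p q assume ne: "y (p,q) \<noteq> 0"
    show "(p,q) \<in> B k \<and> p + q = i - 1"
    proof (cases "p \<ge> 1")
      case True then have "x (p+1,q) \<noteq> 0" using ne by (simp add: y_def)
      from homD[OF x this] True i show ?thesis by auto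
    next
      case False then have "q = 1" "x (1,1) \<noteq> 0" using ne by (auto simp: y_def split: if_splits)
      from homD[OF x this(2)] False \<open>q = 1\<close> show ?thesis by auto
    qed
  qed
  moreover have "z \<in> hom k (i - 1)"
  proof (rule homI)
    fix p q assume "z (p,q) \<noteq> 0"
    then have pq: "p = 1" "q \<ge> 1" "x (1,q+1) \<noteq> 0" by (auto simp: z_def split: if_splits)
    from homD[OF x pq(3)] pq show "(p,q) \<in> B k \<and> p + q = i - 1" by auto
  qed
  moreover have "x = (\<lambda>ij. br k (E 1 0) y ij + br k (E 0 1) z ij)"
  proof (rule ext, clarify)
    fix p q
    have y10: "y (1,0) = 0" using hom_eq_zero[OF x, of "Suc (Suc 0)" 0] by (simp add: y_def)
    show "x (p,q) = br k (E 1 0) y (p,q) + br k (E 0 1) z (p,q)"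
    proof (cases "1 \<le> p \<and> 1 \<le> q \<and> p + q \<le> k")
      case False
      have "x (p,q) = 0" by (rule hom_eq_zero[OF x]) (use False i in auto)
      with False show ?thesis by (auto simp: br_apply)
    next
      case True
      then show ?thesis
        using i y10 by (cases "p = 1"; cases "q = 1") (auto simp: br_apply y_def z_def)
    qed
  qed
  ultimately show ?thesis using that by blast
qed

lemma hom_induct [consumes 2, case_names hom1 br add]:
  assumes "i \<in> {1..k}" "x \<in> hom k i"
    and hom1: "\<And>x. x \<in> hom k 1 \<Longrightarrow> P 1 x"
    and br: "\<And>i e y. 2 \<le> i \<Longrightarrow> i \<le> k \<Longrightarrow> e \<in> hom k 1 \<Longrightarrow> y \<in> hom k (i - 1)
              \<Longrightarrow> P 1 e \<Longrightarrow> P (i - 1) y \<Longrightarrow> P i (br k e y)"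
    and add: "\<And>i u v. 2 \<le> i \<Longrightarrow> i \<le> k \<Longrightarrow> u \<in> hom k i \<Longrightarrow> v \<in> hom k i
              \<Longrightarrow> P i u \<Longrightarrow> P i v \<Longrightarrow> P i (\<lambda>ij. u ij + v ij)"
  shows "P i x"
  using assms(1,2)
proof (induction i arbitrary: x rule: less_induct)
  case (less i)
  show ?case
  proof (cases "i = 1")
    case True then show ?thesis using hom1 less.prems by simp
  next
    case False
    with less.prems have i: "2 \<le> i" "i \<le> k" by auto
    obtain y z where y: "y \<in> hom k (i - 1)" and z: "z \<in> hom k (i - 1)"
      and x: "x = (\<lambda>ij. br k (E 1 0) y ij + br k (E 0 1) z ij)"
      using hom_generated_by_hom1[OF i(1) less.prems(2)] by blast
    have "i - 1 < i" "i - 1 \<in> {1..k}" using i by auto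
    then have "P (i - 1) y" "P (i - 1) z" using less.IH y z by blast+
    then have "P i (br k (E 1 0) y)" "P i (br k (E 0 1) z)"
      using br[OF i E10_hom y] br[OF i E01_hom z] hom1 E10_hom E01_hom by auto
    moreover have "br k (E 1 0) y \<in> hom k i" "br k (E 0 1) z \<in> hom k i"
      using br_hom[OF E10_hom y] br_hom[OF E01_hom z] i by simp_all
    ultimately show ?thesis unfolding x using add[OF i] by blast
  qed
qed

section \<open>Elements of non-negative degree are determined on \<open>g_-1\<close>\<close>

definition vec_of :: "pe \<Rightarrow> vec" where
  "vec_of X = (case X of Neg u \<Rightarrow> u | Der p f \<Rightarrow> (\<lambda>_. 0))"

lemma vec_of_Neg [simp]: "vec_of (Neg u) = u"
  by (simp add: vec_of_def)

lemma inG_negD: "inG k X d \<Longrightarrow> d < 0 \<Longrightarrow> X = Neg (vec_of X) \<and> vec_of X \<in> hom k (nat (- d))"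
  by (cases X) auto

lemma inG_nonnegE:
  assumes "inG k X (int p)"
  obtains f where "X = Der p f"
  using assms by (cases X) auto

lemma inG_DerD:
  "inG k (Der p f) (int p) \<Longrightarrow> i \<in> {1..k} \<Longrightarrow> x \<in> hom k i \<Longrightarrow> inG k (f i x) (int p - int i)"
  by auto

lemma inG_act: "inG k X d \<Longrightarrow> j \<in> {1..k} \<Longrightarrow> y \<in> hom k j \<Longrightarrow> inG k (act k X j y) (d - int j)"
proof (cases X)
  case (Neg u)
  assume X: "inG k X d" and "j \<in> {1..k}" and y: "y \<in> hom k j"
  with Neg have d: "d < 0" "u \<in> hom k (nat (- d))" by auto
  then have "nat (- (d - int j)) = nat (- d) + j" by linarith
  then show ?thesis using br_hom[OF d(2) y] d Neg by (simp add: act_def)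
qed (auto simp: act_def)

lemma is_zero_act: "is_zero k X \<Longrightarrow> j \<in> {1..k} \<Longrightarrow> y \<in> hom k j \<Longrightarrow> is_zero k (act k X j y)"
  by (cases X) (auto simp: act_def)

lemma peq_act: "peq k X Y \<Longrightarrow> j \<in> {1..k} \<Longrightarrow> y \<in> hom k j \<Longrightarrow> peq k (act k X j y) (act k Y j y)"
  by (cases X; cases Y) (simp_all add: act_def peq_refl, simp_all add: peq_def fun_eq_iff split: if_splits)

lemma lin_condD:
  "lin_cond k f \<Longrightarrow> i \<in> {1..k} \<Longrightarrow> x \<in> hom k i \<Longrightarrow> y \<in> hom k i \<Longrightarrow>
   peq k (f i (\<lambda>ij. a * x ij + b * y ij)) (padd (psmul a (f i x)) (psmul b (f i y)))"
  unfolding lin_cond_def by blast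

lemma leib_condD:
  "leib_cond k f \<Longrightarrow> i \<in> {1..k} \<Longrightarrow> j \<in> {1..k} \<Longrightarrow> x \<in> hom k i \<Longrightarrow> y \<in> hom k j \<Longrightarrow>
   (if i + j \<le> k
    then peq k (f (i + j) (br k x y)) (padd (act k (f i x) j y) (psmul (-1) (act k (f j y) i x)))
    else is_zero k (padd (act k (f i x) j y) (psmul (-1) (act k (f j y) i x))))"
  unfolding leib_cond_def Let_def by blast

lemma inG_leib_hom1:
  assumes X: "inG k (Der p f) (int p)" and i: "2 \<le> i" "i \<le> k"
    and e: "e \<in> hom k 1" and y: "y \<in> hom k (i - 1)"
  shows "peq k (f i (br k e y)) (padd (act k (f 1 e) (i - 1) y) (psmul (-1) (act k (f (i - 1) y) 1 e)))"
    and "inG k (act k (f 1 e) (i - 1) y) (int p - int i)"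
    and "inG k (act k (f (i - 1) y) 1 e) (int p - int i)"
proof -
  have i1: "1 + (i - 1) = i" "i - 1 \<in> {1..k}" "1 \<in> {1..k}" using i by auto
  then show "peq k (f i (br k e y)) (padd (act k (f 1 e) (i - 1) y) (psmul (-1) (act k (f (i - 1) y) 1 e)))"
    using leib_condD[of k f 1 "i - 1" e y] X i e y by simp
  show "inG k (act k (f 1 e) (i - 1) y) (int p - int i)"
    using inG_act[OF inG_DerD[OF X i1(3) e] i1(2) y] i by simp
  show "inG k (act k (f (i - 1) y) 1 e) (int p - int i)"
    using inG_act[OF inG_DerD[OF X i1(2) y] i1(3) e] i by simp
qed

lemma inG_lin_add:
  assumes X: "inG k (Der p f) (int p)" and "i \<in> {1..k}" "u \<in> hom k i" "v \<in> hom k i"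
  shows "peq k (f i (\<lambda>ij. u ij + v ij)) (padd (f i u) (f i v))"
  using lin_condD[of k f i u v 1 1] assms by simp

text \<open>Since \<open>g_-1\<close> generates \<open>n_k\<close>, the Leibniz rule propagates agreement (or vanishing)
  on \<open>g_-1\<close> to every degree.\<close>

lemma Der_peq_if_agree_on_hom1:
  assumes X: "inG k (Der p f) (int p)" and Y: "inG k (Der p g) (int p)"
    and on_hom1: "\<forall>x\<in>hom k 1. peq k (f 1 x) (g 1 x)"
  shows "peq k (Der p f) (Der p g)"
proof -
  have "peq k (f i x) (g i x)" if "i \<in> {1..k}" "x \<in> hom k i" for i x
    using that
  proof (induction rule: hom_induct)
    case (hom1 x) then show ?case using on_hom1 by blast
  next
    case (br i e y)
    note F = inG_leib_hom1[OF X br(1,2,3,4)] and G = inG_leib_hom1[OF Y br(1,2,3,4)]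
    have "i - 1 \<in> {1..k}" "1 \<in> {1..k}" using br by auto
    then have "peq k (act k (f 1 e) (i - 1) y) (act k (g 1 e) (i - 1) y)"
      "peq k (act k (f (i - 1) y) 1 e) (act k (g (i - 1) y) 1 e)"
      using peq_act br by auto
    with peq_lincomb[OF F(2,3), of _ _ 1 "-1"]
    have "peq k (padd (act k (f 1 e) (i - 1) y) (psmul (-1) (act k (f (i - 1) y) 1 e)))
                (padd (act k (g 1 e) (i - 1) y) (psmul (-1) (act k (g (i - 1) y) 1 e)))"
      by simp
    then show ?case using F(1) G(1) by (meson peq_sym peq_trans)
  next
    case (add i u v)
    then have i: "i \<in> {1..k}" by simp
    have "peq k (padd (f i u) (f i v)) (padd (g i u) (g i v))"
      using peq_lincomb[OF inG_DerD[OF X i add(3)] inG_DerD[OF X i add(4)] add(5,6), of 1 1] by simp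
    then show ?case using inG_lin_add[OF X i add(3,4)] inG_lin_add[OF Y i add(3,4)]
      by (meson peq_sym peq_trans)
  qed
  then show ?thesis unfolding peq_def by simp
qed

lemma Der_is_zero_if_zero_on_hom1:
  assumes X: "inG k (Der p f) (int p)" and on_hom1: "\<forall>x\<in>hom k 1. is_zero k (f 1 x)"
  shows "is_zero k (Der p f)"
proof -
  have "is_zero k (f i x)" if "i \<in> {1..k}" "x \<in> hom k i" for i x
    using that
  proof (induction rule: hom_induct)
    case (hom1 x) then show ?case using on_hom1 by blast
  next
    case (br i e y)
    note F = inG_leib_hom1[OF X br(1,2,3,4)]
    have "i - 1 \<in> {1..k}" "1 \<in> {1..k}" using br by auto
    then have "is_zero k (act k (f 1 e) (i - 1) y)" "is_zero k (act k (f (i - 1) y) 1 e)"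
      using is_zero_act br by auto
    with is_zero_lincomb[OF F(2,3), of 1 "-1"]
    have "is_zero k (padd (act k (f 1 e) (i - 1) y) (psmul (-1) (act k (f (i - 1) y) 1 e)))"
      by simp
    then show ?case using F(1) by (rule peq_is_zero[rotated])
  next
    case (add i u v)
    then have i: "i \<in> {1..k}" by simp
    have "is_zero k (padd (f i u) (f i v))"
      using is_zero_lincomb[OF inG_DerD[OF X i add(3)] inG_DerD[OF X i add(4)] add(5,6), of 1 1] by simp
    then show ?case using inG_lin_add[OF X i add(3,4)] by (rule peq_is_zero[rotated])
  qed
  then show ?thesis by simp
qed

section \<open>Degree zero: \<open>g_0 = gl(g_-1)\<close>\<close>

text \<open>The derivation of \<open>n_k\<close> extending the endomorphism \<open>e_10 \<mapsto> a e_10 + b e_01\<close>,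
  \<open>e_01 \<mapsto> c e_10 + d e_01\<close> of \<open>g_-1\<close>; for \<open>p, q \<ge> 1\<close> it sends \<open>e_pq\<close> to
  \<open>(p a + q d) e_pq + (p - 1) b e_(p-1)(q+1) + (q - 1) c e_(p+1)(q-1)\<close>.\<close>

definition mat_der :: "real \<Rightarrow> real \<Rightarrow> real \<Rightarrow> real \<Rightarrow> vec \<Rightarrow> vec" where
  "mat_der a b c d v = (\<lambda>(p,q).
     if p = 1 \<and> q = 0 then a * v (1,0) + c * v (0,1)
     else if p = 0 \<and> q = 1 then b * v (1,0) + d * v (0,1)
     else (real p * a + real q * d) * v (p,q) + real p * b * v (p+1, q-1) + real q * c * v (p-1, q+1))"

lemma mat_der_apply:
  "mat_der a b c d v (p,q) =
    (if p = 1 \<and> q = 0 then a * v (1,0) + c * v (0,1)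
     else if p = 0 \<and> q = 1 then b * v (1,0) + d * v (0,1)
     else (real p * a + real q * d) * v (p,q) + real p * b * v (p+1, q-1) + real q * c * v (p-1, q+1))"
  by (simp add: mat_der_def)

lemma mat_der_lincomb:
  "mat_der a b c d (\<lambda>ij. s * x ij + t * y ij) = (\<lambda>ij. s * mat_der a b c d x ij + t * mat_der a b c d y ij)"
  by (auto simp: fun_eq_iff mat_der_def algebra_simps)

lemma mat_der_uminus: "mat_der a b c d (\<lambda>ij. - v ij) = (\<lambda>ij. - mat_der a b c d v ij)"
  by (auto simp: fun_eq_iff mat_der_def algebra_simps)

lemma mat_der_zero [simp]: "mat_der a b c d (\<lambda>_. 0) = (\<lambda>_. 0)"
  by (auto simp: fun_eq_iff mat_der_def)

lemma mat_der_hom: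
  assumes v: "v \<in> hom k n"
  shows "mat_der a b c d v \<in> hom k n"
proof (rule homI)
  fix p q assume ne: "mat_der a b c d v (p,q) \<noteq> 0"
  note hv = homD[OF v]
  show "(p,q) \<in> B k \<and> p + q = n"
  proof (cases "p = 1 \<and> q = 0 \<or> p = 0 \<and> q = 1")
    case True
    then have "v (1,0) \<noteq> 0 \<or> v (0,1) \<noteq> 0" using ne by (auto simp: mat_der_apply)
    then have "n = 1" using hv by fastforce
    with True show ?thesis by auto
  next
    case False
    then have "v (p,q) \<noteq> 0 \<or> (p \<noteq> 0 \<and> v (p+1,q-1) \<noteq> 0) \<or> (q \<noteq> 0 \<and> v (p-1,q+1) \<noteq> 0)"
      using ne by (auto simp: mat_der_apply)
    then show ?thesis
    proof (elim disjE conjE)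
      assume "v (p,q) \<noteq> 0" then show ?thesis using hv by blast
    next
      assume "p \<noteq> 0" "v (p+1,q-1) \<noteq> 0"
      from hv[OF this(2)] this(1) show ?thesis by auto
    next
      assume "q \<noteq> 0" "v (p-1,q+1) \<noteq> 0"
      from hv[OF this(2)] this(1) show ?thesis by auto
    qed
  qed
qed

lemma hom_deg_ge2_eq_zero:
  "v \<in> hom k n \<Longrightarrow> 2 \<le> n \<Longrightarrow> \<not> (1 \<le> p \<and> 1 \<le> q \<and> p + q = n \<and> n \<le> k) \<Longrightarrow> v (p,q) = 0"
  by (rule hom_eq_zero) auto

lemma br_hom1_left:
  assumes x: "x \<in> hom k 1" and y: "y \<in> hom k j" and j: "2 \<le> j" "j + 1 \<le> k"
  shows "br k x y = (\<lambda>(p,q). x (1,0) * y (p-1,q) + x (0,1) * y (p,q-1))"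
proof (rule ext, clarify)
  fix p q
  note y0 = hom_deg_ge2_eq_zero[OF y j(1)]
  show "br k x y (p,q) = x (1,0) * y (p-1,q) + x (0,1) * y (p,q-1)"
  proof (cases "1 \<le> p \<and> 1 \<le> q \<and> p + q \<le> k")
    case True
    then show ?thesis using y0[of 1 0] y0[of 0 1] y0[of p 0]
      by (cases "q = 1") (auto simp: br_apply)
  next
    case False
    have "y (p-1,q) = 0" by (rule y0) (use False j in auto)
    moreover have "y (p,q-1) = 0" by (rule y0) (use False j in auto)
    moreover have "br k x y (p,q) = 0" using False by (auto simp: br_apply)
    ultimately show ?thesis by simp
  qed
qed

lemma mat_der_deg_ge2:
  assumes "v \<in> hom k n" "2 \<le> n"
  shows "mat_der a b c d v = (\<lambda>(p,q).
           (real p * a + real q * d) * v (p,q) + real p * b * v (p+1, q-1) + real q * c * v (p-1, q+1))"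
proof (rule ext, clarify)
  fix p q
  have "v (1,0) = 0" "v (0,1) = 0" "v (2,0) = 0" "v (0,2) = 0"
    using hom_deg_ge2_eq_zero[OF assms] by auto
  then show "mat_der a b c d v (p,q) =
      (real p * a + real q * d) * v (p,q) + real p * b * v (p+1, q-1) + real q * c * v (p-1, q+1)"
    by (auto simp: mat_der_apply numeral_2_eq_2)
qed

lemma mat_der_leib_hom1_hom1:
  assumes "x \<in> hom k 1" "y \<in> hom k 1"
  shows "mat_der a b c d (br k x y) = (\<lambda>ij. br k (mat_der a b c d x) y ij - br k (mat_der a b c d y) x ij)"
proof (rule ext, clarify)
  fix p q
  have x0: "x (p,q) = 0" and y0: "y (p,q) = 0" if "\<not> (p = 1 \<and> q = 0)" "\<not> (p = 0 \<and> q = 1)" for p q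
    using hom_eq_zero[OF assms(1), of p q] hom_eq_zero[OF assms(2), of p q] that by auto
  show "mat_der a b c d (br k x y) (p,q) = br k (mat_der a b c d x) y (p,q) - br k (mat_der a b c d y) x (p,q)"
    by (cases "p = 1"; cases "q = 1")
      (auto simp: mat_der_apply br_apply x0 y0 algebra_simps)
qed

lemma mat_der_leib_hom1:
  assumes x: "x \<in> hom k 1" and y: "y \<in> hom k j" and j: "2 \<le> j" "j + 1 \<le> k"
  shows "mat_der a b c d (br k x y) = (\<lambda>ij. br k (mat_der a b c d x) y ij - br k (mat_der a b c d y) x ij)"
proof (rule ext, clarify)
  fix p q
  have Mx: "mat_der a b c d x \<in> hom k 1" by (rule mat_der_hom[OF x])
  have "br k x y \<in> hom k (1 + j)" "2 \<le> 1 + j" using br_hom[OF x y] j by simp_all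
  note M_br = mat_der_deg_ge2[OF this, of a b c d]
  have x_Mx: "mat_der a b c d x (Suc 0,0) = a * x (Suc 0,0) + c * x (0,Suc 0)"
    "mat_der a b c d x (0,Suc 0) = b * x (Suc 0,0) + d * x (0,Suc 0)"
    by (auto simp: mat_der_apply)
  have y0: "y (0,s) = 0" "y (s,0) = 0" for s using hom_deg_ge2_eq_zero[OF y j(1)] by auto
  show "mat_der a b c d (br k x y) (p,q) = br k (mat_der a b c d x) y (p,q) - br k (mat_der a b c d y) x (p,q)"
    unfolding M_br br_antisym[of k "mat_der a b c d y" x] br_hom1_left[OF x mat_der_hom[OF y] j]
      br_hom1_left[OF Mx y j]
    by (simp add: br_hom1_left[OF x y j] mat_der_deg_ge2[OF y j(1)] x_Mx)
      (cases p; cases q; simp add: y0 algebra_simps)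
qed

lemma mat_der_leib:
  assumes x: "x \<in> hom k i" and y: "y \<in> hom k j" and ij: "1 \<le> i" "1 \<le> j" "i + j \<le> k"
  shows "mat_der a b c d (br k x y) = (\<lambda>ij. br k (mat_der a b c d x) y ij - br k (mat_der a b c d y) x ij)"
proof -
  consider "i = 1" "j = 1" | "i = 1" "2 \<le> j" | "2 \<le> i" "j = 1" | "2 \<le> i" "2 \<le> j"
    using ij by linarith
  then show ?thesis
  proof cases
    case 1 then show ?thesis using mat_der_leib_hom1_hom1 x y by simp
  next
    case 2 then show ?thesis using mat_der_leib_hom1[of x k y j] x y ij by simp
  next
    case 3
    have "mat_der a b c d (br k x y) = (\<lambda>ij. - mat_der a b c d (br k y x) ij)"
      by (subst br_antisym) (rule mat_der_uminus)
    with mat_der_leib_hom1[of y k x i] x y ij 3 show ?thesis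
      by (simp add: fun_eq_iff)
  next
    case 4
    have "br k x y = (\<lambda>_. 0)" "br k (mat_der a b c d x) y = (\<lambda>_. 0)"
      "br k (mat_der a b c d y) x = (\<lambda>_. 0)"
      using br_deg_ge2_zero[OF x y 4] br_deg_ge2_zero[OF mat_der_hom[OF x] y 4]
        br_deg_ge2_zero[OF mat_der_hom[OF y] x 4(2,1)] by simp_all
    then show ?thesis by simp
  qed
qed

definition mat_elt :: "real \<Rightarrow> real \<Rightarrow> real \<Rightarrow> real \<Rightarrow> pe" where
  "mat_elt a b c d = Der 0 (\<lambda>i x. Neg (mat_der a b c d x))"

lemma inG_mat_elt:
  assumes k: "1 \<le> k"
  shows "inG k (mat_elt a b c d) 0"
proof -
  have "leib_cond k (\<lambda>i x. Neg (mat_der a b c d x))"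
    unfolding leib_cond_def Let_def
  proof (intro ballI)
    fix i j x y assume "i \<in> {1..k}" "j \<in> {1..k}" and x: "x \<in> hom k i" and y: "y \<in> hom k j"
    then show "if i + j \<le> k
          then peq k (Neg (mat_der a b c d (br k x y)))
                 (padd (act k (Neg (mat_der a b c d x)) j y) (psmul (- 1) (act k (Neg (mat_der a b c d y)) i x)))
          else is_zero k (padd (act k (Neg (mat_der a b c d x)) j y) (psmul (- 1) (act k (Neg (mat_der a b c d y)) i x)))"
      using mat_der_leib[OF x y] br_above_k[OF mat_der_hom[OF x] y] br_above_k[OF mat_der_hom[OF y] x] k
      by (simp add: act_def add.commute)
  qed
  moreover have "lin_cond k (\<lambda>i x. Neg (mat_der a b c d x))"
    unfolding lin_cond_def by (simp add: mat_der_lincomb)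
  ultimately show ?thesis unfolding mat_elt_def using mat_der_hom by simp
qed

lemma endo1_eq_mat_der:
  assumes A: "endo1 k A" and x: "x \<in> hom k 1"
  shows "A x = mat_der (A (E 1 0) (1,0)) (A (E 1 0) (0,1)) (A (E 0 1) (1,0)) (A (E 0 1) (0,1)) x"
    (is "_ = ?M x")
proof (rule ext, clarify)
  fix p q
  have Ax: "A x = (\<lambda>ij. x (1,0) * A (E 1 0) ij + x (0,1) * A (E 0 1) ij)"
    using A E10_hom E01_hom hom1_eq_lincomb_E[OF x] unfolding endo1_def by metis
  show "A x (p,q) = ?M x (p,q)"
  proof (cases "p = 1 \<and> q = 0 \<or> p = 0 \<and> q = 1")
    case True then show ?thesis by (auto simp: Ax mat_der_apply algebra_simps)
  next
    case False
    have "A (E 1 0) \<in> hom k 1" "A (E 0 1) \<in> hom k 1" "?M x \<in> hom k 1"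
      using A E10_hom E01_hom mat_der_hom[OF x] unfolding endo1_def by auto
    with False show ?thesis by (simp add: Ax hom_eq_zero)
  qed
qed

lemma inG_g0_eq_mat_der:
  assumes X: "inG k X 0" and k: "1 \<le> k"
  obtains a b c d where
    "\<And>j y. j \<in> {1..k} \<Longrightarrow> y \<in> hom k j \<Longrightarrow> act k X j y = Neg (mat_der a b c d y)"
proof -
  obtain g where g: "X = Der 0 g" using X by (cases X) auto
  have X': "inG k (Der 0 g) (int 0)" using X g by simp
  have g_Neg: "\<exists>v. g j y = Neg v" if "j \<in> {1..k}" "y \<in> hom k j" for j y
    using inG_negD[OF inG_DerD[OF X' that]] that by auto
  define A where "A x = vec_of (g 1 x)" for x
  have k1: "1 \<in> {1..k}" using k by simp
  have gA: "g 1 x = Neg (A x)" "A x \<in> hom k 1" if "x \<in> hom k 1" for x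
    using inG_negD[OF inG_DerD[OF X' k1 that]] unfolding A_def by simp_all
  have A: "endo1 k A"
    unfolding endo1_def
  proof (intro conjI ballI allI)
    fix x y a b assume x: "x \<in> hom k 1" and y: "y \<in> hom k 1"
    show "A x \<in> hom k 1" using gA[OF x] by simp
    have "lin_cond k g" using X' by simp
    from lin_condD[OF this k1 x y, of a b]
    show "A (\<lambda>ij. a * x ij + b * y ij) = (\<lambda>ij. a * A x ij + b * A y ij)"
      unfolding gA(1)[OF x] gA(1)[OF y] gA(1)[OF hom_lincomb[OF x y]] by simp
  qed
  define M where "M = mat_der (A (E 1 0) (1,0)) (A (E 1 0) (0,1)) (A (E 0 1) (1,0)) (A (E 0 1) (0,1))"
  have "peq k (g 1 x) (Neg (M x))" if "x \<in> hom k 1" for x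
    using endo1_eq_mat_der[OF A that] unfolding gA(1)[OF that] M_def by simp
  then have "peq k (Der 0 g) (mat_elt (A (E 1 0) (1,0)) (A (E 1 0) (0,1)) (A (E 0 1) (1,0)) (A (E 0 1) (0,1)))"
    using Der_peq_if_agree_on_hom1 X' inG_mat_elt[OF k] by (simp add: mat_elt_def M_def)
  then have "peq k (g j y) (Neg (M y))" if "j \<in> {1..k}" "y \<in> hom k j" for j y
    using that unfolding peq_def mat_elt_def M_def by simp
  with g_Neg have "act k X j y = Neg (M y)" if "j \<in> {1..k}" "y \<in> hom k j" for j y
    using that unfolding g act_def by fastforce
  with that show ?thesis unfolding M_def by blast
qed

theorem g0_realizes_endo1:
  assumes k: "1 \<le> k" and A: "endo1 k A"
  shows "\<exists>X. inG k X 0 \<and> (\<forall>x\<in>hom k 1. peq k (act k X 1 x) (Neg (A x)))"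
proof (intro exI conjI ballI)
  let ?X = "mat_elt (A (E 1 0) (1,0)) (A (E 1 0) (0,1)) (A (E 0 1) (1,0)) (A (E 0 1) (0,1))"
  show "inG k ?X 0" by (rule inG_mat_elt[OF k])
  show "peq k (act k ?X 1 x) (Neg (A x))" if "x \<in> hom k 1" for x
    using endo1_eq_mat_der[OF A that] by (simp add: mat_elt_def act_def)
qed

theorem g0_determined_by_hom1:
  assumes X: "inG k X 0" and Y: "inG k Y 0"
    and agree: "\<forall>x\<in>hom k 1. peq k (act k X 1 x) (act k Y 1 x)"
  shows "peq k X Y"
proof -
  obtain f where f: "X = Der 0 f" using inG_nonnegE[of k X 0] X by auto
  obtain g where g: "Y = Der 0 g" using inG_nonnegE[of k Y 0] Y by auto
  show ?thesis
    using Der_peq_if_agree_on_hom1[of k 0 f g] X Y agree unfolding f g by (simp add: act_def)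
qed

section \<open>Degree one vanishes for \<open>k \<ge> 4\<close>\<close>

text \<open>Closed forms of \<open>f(e_n1)\<close> and \<open>f(e_1n)\<close> for \<open>f \<in> g_1\<close>: they solve the recursions
  \<open>f(e_(n+1)1) = [f(e_10), e_n1] - [f(e_n1), e_10]\<close> (and symmetrically) started at \<open>f(e_11) = 0\<close>.\<close>

definition En1_value :: "real \<Rightarrow> real \<Rightarrow> real \<Rightarrow> nat \<Rightarrow> vec" where
  "En1_value a b d n = (\<lambda>(p,q).
     if p = n - 1 \<and> q = 1 then a * real n * (real n - 1) / 2 + (real n - 1) * d
     else if p = n - 2 \<and> q = 2 then b * (real n - 1) * (real n - 2) / 2 else 0)"

definition E1n_value :: "real \<Rightarrow> real \<Rightarrow> real \<Rightarrow> nat \<Rightarrow> vec" where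
  "E1n_value a c d n = (\<lambda>(p,q).
     if p = 1 \<and> q = n - 1 then d * real n * (real n - 1) / 2 + (real n - 1) * a
     else if p = 2 \<and> q = n - 2 then c * (real n - 1) * (real n - 2) / 2 else 0)"

lemma br_E10_right:
  "br k u (E 1 0) (p,q) = (if 1 \<le> p \<and> 1 \<le> q \<and> p + q \<le> k then - u (p-1,q) else 0)"
  by (simp add: br_apply)

lemma br_E01_right:
  "br k u (E 0 1) (p,q) = (if 1 \<le> p \<and> 1 \<le> q \<and> p + q \<le> k then
    (if p = 1 \<and> q = 1 then u (1,0) else 0) - (if 2 \<le> q then u (p,q-1) else 0) else 0)"
  by (auto simp: br_apply)

lemma mat_der_En1:
  "1 \<le> n \<Longrightarrow> mat_der a b c d (E n 1) (p,q) =
    (if p = n \<and> q = 1 then real n * a + d else if p + 1 = n \<and> q = 2 then real p * b else 0)"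
  by (auto simp: mat_der_apply)

lemma mat_der_E1n:
  "1 \<le> n \<Longrightarrow> mat_der a b c d (E 1 n) (p,q) =
    (if p = 1 \<and> q = n then a + real n * d else if p = 2 \<and> q + 1 = n then real q * c else 0)"
  by (auto simp: mat_der_apply)

lemma En1_value_step:
  assumes n: "1 \<le> n" "n + 1 \<le> k"
  shows "(\<lambda>ij. mat_der a b c d (E n 1) ij - br k (En1_value a b d n) (E 1 0) ij) = En1_value a b d (n + 1)"
proof (rule ext, clarify)
  fix p q :: nat
  note simps = mat_der_En1[OF n(1)] br_E10_right
  consider "p = n \<and> q = 1" | "p + 1 = n \<and> q = 2" | "\<not> (p = n \<and> q = 1)" "\<not> (p + 1 = n \<and> q = 2)"
    by blast
  then show "mat_der a b c d (E n 1) (p,q) - br k (En1_value a b d n) (E 1 0) (p,q) = En1_value a b d (n + 1) (p,q)"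
  proof cases
    case 1
    then show ?thesis using n unfolding simps by (simp add: En1_value_def field_simps)
  next
    case 2
    show ?thesis
    proof (cases "p = 0")
      case True then show ?thesis using 2 unfolding simps by (simp add: En1_value_def)
    next
      case False
      have n_p: "n = Suc p" using 2 by auto
      have "En1_value a b d n (p - 1, q) = b * (real n - 1) * (real n - 2) / 2"
        "En1_value a b d (n + 1) (p, q) = b * (real (n + 1) - 1) * (real (n + 1) - 2) / 2"
        using 2 False by (simp_all add: En1_value_def n_p)
      with 2 False n show ?thesis unfolding simps by (simp add: n_p field_simps)
    qed
  next
    case 3
    then have "En1_value a b d (n + 1) (p,q) = 0" "1 \<le> p \<Longrightarrow> En1_value a b d n (p - 1, q) = 0"
      using n by (auto simp: En1_value_def)
    with 3 show ?thesis unfolding simps by auto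
  qed
qed

lemma E1n_value_step:
  assumes n: "1 \<le> n" "n + 1 \<le> k"
  shows "(\<lambda>ij. mat_der a b c d (E 1 n) ij - br k (E1n_value a c d n) (E 0 1) ij) = E1n_value a c d (n + 1)"
proof (rule ext, clarify)
  fix p q :: nat
  have E1n_10: "E1n_value a c d n (1,0) = 0" using n by (cases "n = 1") (auto simp: E1n_value_def)
  note simps = mat_der_E1n[OF n(1)] br_E01_right E1n_10
  consider "p = 1 \<and> q = n" | "p = 2 \<and> q + 1 = n" | "\<not> (p = 1 \<and> q = n)" "\<not> (p = 2 \<and> q + 1 = n)"
    by blast
  then show "mat_der a b c d (E 1 n) (p,q) - br k (E1n_value a c d n) (E 0 1) (p,q) = E1n_value a c d (n + 1) (p,q)"
  proof cases
    case 1
    show ?thesis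
    proof (cases "n = 1")
      case True then show ?thesis using 1 n unfolding simps by (simp add: E1n_value_def)
    next
      case False
      have "E1n_value a c d n (p, q - 1) = d * real n * (real n - 1) / 2 + (real n - 1) * a"
        "E1n_value a c d (n + 1) (p, q) = d * real (n + 1) * (real (n + 1) - 1) / 2 + (real (n + 1) - 1) * a"
        using 1 by (simp_all add: E1n_value_def)
      with 1 False n show ?thesis unfolding simps by (simp add: field_simps)
    qed
  next
    case 2
    show ?thesis
    proof (cases "q \<le> 1")
      case True then show ?thesis using 2 unfolding simps by (cases "q = 0") (auto simp: E1n_value_def)
    next
      case False
      have n_q: "n = Suc q" using 2 by auto
      have "E1n_value a c d n (p, q - 1) = c * (real n - 1) * (real n - 2) / 2"
        "E1n_value a c d (n + 1) (p, q) = c * (real (n + 1) - 1) * (real (n + 1) - 2) / 2"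
        using 2 False by (simp_all add: E1n_value_def n_q)
      with 2 False n show ?thesis unfolding simps by (simp add: n_q field_simps)
    qed
  next
    case 3
    then have "E1n_value a c d (n + 1) (p,q) = 0" "2 \<le> q \<Longrightarrow> E1n_value a c d n (p, q - 1) = 0"
      using n by (auto simp: E1n_value_def)
    with 3 show ?thesis unfolding simps by auto
  qed
qed

lemma br_E10_E01: "2 \<le> k \<Longrightarrow> br k (E 1 0) (E 0 1) = E 1 1"
  by (auto simp: fun_eq_iff br_apply)

lemma br_E10_En1: "1 \<le> n \<Longrightarrow> n + 2 \<le> k \<Longrightarrow> br k (E 1 0) (E n 1) = E (n + 1) 1"
  by (auto simp: fun_eq_iff br_apply)

lemma br_E01_E1n: "1 \<le> n \<Longrightarrow> n + 2 \<le> k \<Longrightarrow> br k (E 0 1) (E 1 n) = E 1 (n + 1)"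
  by (auto simp: fun_eq_iff br_apply)

lemma top_system_trivial:
  fixes K a d :: real
  assumes K: "2 < K"
    and eq1: "a * K * (K - 1) / 2 + (K - 1) * d = 0"
    and eq2: "a * (K - 1) * (K - 2) / 2 + 2 * (K - 2) * d = 0"
  shows "a = 0" "d = 0"
proof -
  have "(K - 1) * (a * K + 2 * d) = 0" using eq1 by (simp add: field_simps)
  with K have 1: "a * K + 2 * d = 0" by simp
  have "(K - 2) * (a * (K - 1) + 4 * d) = 0" using eq2 by (simp add: field_simps)
  with K have 2: "a * (K - 1) + 4 * d = 0" by simp
  from 1 2 have "a * (K + 1) = 0" by (simp add: algebra_simps)
  with K show "a = 0" by simp
  with 1 show "d = 0" by simp
qed

text \<open>\<open>f \<in> g_1\<close>, where \<open>f(e_10), f(e_01) \<in> g_0\<close> act as the derivations with matrix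
  entries \<open>(a1, b1, c1, d1)\<close> and \<open>(a2, b2, c2, d2)\<close>.\<close>

locale g1_element =
  fixes k :: nat and f :: "nat \<Rightarrow> vec \<Rightarrow> pe" and a1 b1 c1 d1 a2 b2 c2 d2 :: real
  assumes k: "4 \<le> k"
    and elt: "inG k (Der 1 f) (int 1)"
    and act_E10: "\<And>j y. j \<in> {1..k} \<Longrightarrow> y \<in> hom k j \<Longrightarrow> act k (f 1 (E 1 0)) j y = Neg (mat_der a1 b1 c1 d1 y)"
    and act_E01: "\<And>j y. j \<in> {1..k} \<Longrightarrow> y \<in> hom k j \<Longrightarrow> act k (f 1 (E 0 1)) j y = Neg (mat_der a2 b2 c2 d2 y)"
begin

lemma f_Neg:
  assumes "2 \<le> i" "i \<le> k" "x \<in> hom k i"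
  shows "f i x = Neg (vec_of (f i x))" "vec_of (f i x) \<in> hom k (i - 1)"
proof -
  have "inG k (f i x) (int 1 - int i)" using inG_DerD[OF elt] assms by simp
  from inG_negD[OF this] assms show "f i x = Neg (vec_of (f i x))" "vec_of (f i x) \<in> hom k (i - 1)"
    by (simp_all add: nat_diff_distrib)
qed

lemma act_f:
  assumes "2 \<le> i" "i \<le> k" "x \<in> hom k i"
  shows "act k (f i x) j y = Neg (br k (vec_of (f i x)) y)"
  by (subst f_Neg(1)[OF assms]) (simp add: act_def)

lemma f_br_hom1:
  assumes e: "e \<in> hom k 1"
    and act_e: "\<And>j y. j \<in> {1..k} \<Longrightarrow> y \<in> hom k j \<Longrightarrow> act k (f 1 e) j y = Neg (mat_der a b c d y)"
    and j: "2 \<le> j" "j \<le> k" and y: "y \<in> hom k j"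
  shows "j + 1 \<le> k \<Longrightarrow> vec_of (f (j + 1) (br k e y)) = (\<lambda>ij. mat_der a b c d y ij - br k (vec_of (f j y)) e ij)"
    and "k < j + 1 \<Longrightarrow> (\<lambda>ij. mat_der a b c d y ij - br k (vec_of (f j y)) e ij) = (\<lambda>_. 0)"
proof -
  have j1: "1 \<in> {1..k}" "j \<in> {1..k}" using j by auto
  have "padd (act k (f 1 e) j y) (psmul (-1) (act k (f j y) 1 e))
        = Neg (\<lambda>ij. mat_der a b c d y ij - br k (vec_of (f j y)) e ij)"
    unfolding act_e[OF j1(2) y] act_f[OF j y] by simp
  note leib = leib_condD[of k f, OF _ j1 e y, unfolded this]
  show "vec_of (f (j + 1) (br k e y)) = (\<lambda>ij. mat_der a b c d y ij - br k (vec_of (f j y)) e ij)"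
    if "j + 1 \<le> k"
  proof -
    have "br k e y \<in> hom k (j + 1)" using br_hom[OF e y] by (simp add: add.commute)
    then have "f (j + 1) (br k e y) = Neg (vec_of (f (j + 1) (br k e y)))"
      using f_Neg(1)[OF _ that] j by simp
    then show ?thesis using leib elt that by (simp add: add.commute) (metis peq_Neg)
  qed
  show "(\<lambda>ij. mat_der a b c d y ij - br k (vec_of (f j y)) e ij) = (\<lambda>_. 0)" if "k < j + 1"
    using leib elt that by simp
qed

lemma f_E11: "vec_of (f 2 (E 1 1)) = (\<lambda>ij. mat_der a1 b1 c1 d1 (E 0 1) ij - mat_der a2 b2 c2 d2 (E 1 0) ij)"
proof -
  have k1: "1 \<in> {1..k}" using k by simp
  have "peq k (f (1 + 1) (br k (E 1 0) (E 0 1)))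
      (padd (act k (f 1 (E 1 0)) 1 (E 0 1)) (psmul (-1) (act k (f 1 (E 0 1)) 1 (E 1 0))))"
    using leib_condD[OF _ k1 k1 E10_hom E01_hom] elt k by simp
  moreover have "f 2 (E 1 1) = Neg (vec_of (f 2 (E 1 1)))"
    using f_Neg(1)[of 2 "E 1 1"] E_hom[of 1 1 k] k by (simp add: numeral_2_eq_2)
  ultimately show ?thesis
    using br_E10_E01[of k] k act_E10[OF k1 E01_hom] act_E01[OF k1 E10_hom]
    by (simp add: numeral_2_eq_2) (metis peq_Neg)
qed

text \<open>The bracket \<open>[e_11, e_12] = 0\<close> forces \<open>[f(e_11), e_12] = 0\<close>, and \<open>[v, e_12]\<close> for
  \<open>v \<in> g_-1\<close> has the entries \<open>v_10\<close>, \<open>v_01\<close>.\<close>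

lemma f_E11_zero: "vec_of (f 2 (E 1 1)) = (\<lambda>_. 0)"
proof -
  define v where "v = vec_of (f 2 (E 1 1))"
  have E11: "E 1 1 \<in> hom k 2" and E12: "E 1 2 \<in> hom k 3"
    using E_hom[of 1 1 k] E_hom[of 1 2 k] k by (simp_all add: numeral_2_eq_2 numeral_3_eq_3)
  have fv: "f 2 (E 1 1) = Neg v" "v \<in> hom k 1"
    using f_Neg[OF _ _ E11] k unfolding v_def by auto
  have "vec_of (f 3 (E 1 2)) \<in> hom k 2" using f_Neg(2)[OF _ _ E12] k by simp
  then have "br k (vec_of (f 3 (E 1 2))) (E 1 1) = (\<lambda>_. 0)"
    using br_deg_ge2_zero[OF _ E11] by simp
  moreover have "act k (f 2 (E 1 1)) 3 (E 1 2) = Neg (br k v (E 1 2))"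
    "act k (f 3 (E 1 2)) 2 (E 1 1) = Neg (br k (vec_of (f 3 (E 1 2))) (E 1 1))"
    using act_f[OF _ _ E11] act_f[OF _ _ E12] k unfolding v_def by simp_all
  ultimately have s: "padd (act k (f 2 (E 1 1)) 3 (E 1 2)) (psmul (-1) (act k (f 3 (E 1 2)) 2 (E 1 1)))
           = Neg (br k v (E 1 2))"
    by simp
  have k23: "2 \<in> {1..k}" "3 \<in> {1..k}" using k by auto
  have br_E11_E12: "br k (E 1 1) (E 1 2) = (\<lambda>_. 0)" by (rule br_deg_ge2_zero[OF E11 E12]) simp_all
  have "leib_cond k f" using elt by simp
  note leib = leib_condD[OF this k23 E11 E12, unfolded s br_E11_E12]
  have "br k v (E 1 2) = (\<lambda>_. 0)"
  proof (cases "2 + 3 \<le> k")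
    case True
    then have k5: "5 \<in> {1..k}" by simp
    obtain u where fu: "f 5 (\<lambda>_. 0) = Neg u"
      using inG_negD[OF inG_DerD[OF elt k5 hom_zero]] by auto
    have "lin_cond k f" using elt by simp
    from lin_condD[OF this k5 hom_zero hom_zero, of 0 0] have "u = (\<lambda>_. 0)"
      by (simp add: fu fun_eq_iff)
    with leib True fu show ?thesis by simp
  next
    case False
    with leib show ?thesis by simp
  qed
  then have "br k v (E 1 2) (2,2) = 0" "br k v (E 1 2) (1,3) = 0" by simp_all
  then have "v (1,0) = 0" "v (0,1) = 0" using k by (simp_all add: br_apply)
  then show ?thesis using hom1_eq_lincomb_E[OF fv(2)] unfolding v_def by simp
qed

lemma c1_eq_a2: "c1 = a2" and d1_eq_b2: "d1 = b2"
  using fun_cong[OF f_E11[unfolded f_E11_zero], of "(1,0)"] fun_cong[OF f_E11[unfolded f_E11_zero], of "(0,1)"]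
  by (simp_all add: mat_der_apply)

lemma f_En1: "1 \<le> n \<Longrightarrow> n + 1 \<le> k \<Longrightarrow> vec_of (f (n + 1) (E n 1)) = En1_value a1 b1 d1 n"
proof (induction n rule: nat_induct_at_least)
  case base
  have "En1_value a1 b1 d1 1 = (\<lambda>_. 0)" by (auto simp: En1_value_def fun_eq_iff)
  then show ?case using f_E11_zero by (simp add: numeral_2_eq_2)
next
  case (Suc m)
  have y: "E m 1 \<in> hom k (m + 1)" using E_hom[of m 1 k] Suc by simp
  have "vec_of (f (m + 1 + 1) (br k (E 1 0) (E m 1))) = En1_value a1 b1 d1 (m + 1)"
    using f_br_hom1(1)[OF E10_hom act_E10 _ _ y] En1_value_step[of m k a1 b1 c1 d1] Suc by simp
  then show ?case using br_E10_En1[of m k] Suc by simp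
qed

lemma f_E1n: "1 \<le> n \<Longrightarrow> n + 1 \<le> k \<Longrightarrow> vec_of (f (n + 1) (E 1 n)) = E1n_value a2 c2 d2 n"
proof (induction n rule: nat_induct_at_least)
  case base
  have "E1n_value a2 c2 d2 1 = (\<lambda>_. 0)" by (auto simp: E1n_value_def fun_eq_iff)
  then show ?case using f_E11_zero by (simp add: numeral_2_eq_2)
next
  case (Suc m)
  have y: "E 1 m \<in> hom k (m + 1)" using E_hom[of 1 m k] Suc by (simp add: add.commute)
  have "vec_of (f (m + 1 + 1) (br k (E 0 1) (E 1 m))) = E1n_value a2 c2 d2 (m + 1)"
    using f_br_hom1(1)[OF E01_hom act_E01 _ _ y] E1n_value_step[of m k a2 b2 c2 d2] Suc by simp
  then show ?case using br_E01_E1n[of m k] Suc by simp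
qed

lemma E_top_hom: "E (k - 1) 1 \<in> hom k k" "E 1 (k - 1) \<in> hom k k"
  using E_hom[of "k - 1" 1 k] E_hom[of 1 "k - 1" k] k by simp_all

lemma f_E_top: "vec_of (f k (E (k - 1) 1)) = En1_value a1 b1 d1 (k - 1)"
  "vec_of (f k (E 1 (k - 1))) = E1n_value a2 c2 d2 (k - 1)"
  using f_En1[of "k - 1"] f_E1n[of "k - 1"] k by simp_all

text \<open>Degree \<open>-(k+1)\<close> is truncated, so the Leibniz rule for \<open>[e_10, e_(k-1)1]\<close> etc. turns
  into linear conditions on the matrix entries.\<close>

lemma En1_value_top: "En1_value a1 b1 d1 k = (\<lambda>_. 0)"
  using f_br_hom1(2)[OF E10_hom act_E10 _ _ E_top_hom(1)] En1_value_step[of "k - 1" k a1 b1 c1 d1] k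
  unfolding f_E_top by simp

lemma E1n_value_top: "E1n_value a2 c2 d2 k = (\<lambda>_. 0)"
  using f_br_hom1(2)[OF E01_hom act_E01 _ _ E_top_hom(2)] E1n_value_step[of "k - 1" k a2 b2 c2 d2] k
  unfolding f_E_top by simp

lemma top_cross_En1: "(real k - 2) * b2 + a1 * (real k - 1) * (real k - 2) / 2 + (real k - 2) * d1 = 0"
proof -
  have "(\<lambda>ij. mat_der a2 b2 c2 d2 (E (k - 1) 1) ij - br k (En1_value a1 b1 d1 (k - 1)) (E 0 1) ij) = (\<lambda>_. 0)"
    using f_br_hom1(2)[OF E01_hom act_E01 _ _ E_top_hom(1)] k unfolding f_E_top by simp
  then have "mat_der a2 b2 c2 d2 (E (k - 1) 1) (k - 2, 2) - br k (En1_value a1 b1 d1 (k - 1)) (E 0 1) (k - 2, 2) = 0"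
    by (metis (no_types) fun_cong)
  moreover have "mat_der a2 b2 c2 d2 (E (k - 1) 1) (k - 2, 2) = real (k - 2) * b2"
    using mat_der_En1[of "k - 1" a2 b2 c2 d2 "k - 2" 2] k by (simp; arith)
  moreover have "br k (En1_value a1 b1 d1 (k - 1)) (E 0 1) (k - 2, 2) = - En1_value a1 b1 d1 (k - 1) (k - 2, 1)"
    using br_E01_right[of k _ "k - 2" 2] k by (simp; arith)
  moreover have "En1_value a1 b1 d1 (k - 1) (k - 2, 1)
      = a1 * real (k - 1) * (real (k - 1) - 1) / 2 + (real (k - 1) - 1) * d1"
    using k by (simp add: En1_value_def numeral_2_eq_2)
  ultimately show ?thesis using k by simp
qed

lemma top_cross_E1n: "(real k - 2) * c1 + d2 * (real k - 1) * (real k - 2) / 2 + (real k - 2) * a2 = 0"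
proof -
  have "(\<lambda>ij. mat_der a1 b1 c1 d1 (E 1 (k - 1)) ij - br k (E1n_value a2 c2 d2 (k - 1)) (E 1 0) ij) = (\<lambda>_. 0)"
    using f_br_hom1(2)[OF E10_hom act_E10 _ _ E_top_hom(2)] k unfolding f_E_top by simp
  then have "mat_der a1 b1 c1 d1 (E 1 (k - 1)) (2, k - 2) - br k (E1n_value a2 c2 d2 (k - 1)) (E 1 0) (2, k - 2) = 0"
    by (metis (no_types) fun_cong)
  moreover have "mat_der a1 b1 c1 d1 (E 1 (k - 1)) (2, k - 2) = real (k - 2) * c1"
    using mat_der_E1n[of "k - 1" a1 b1 c1 d1 2 "k - 2"] k by (simp; arith)
  moreover have "br k (E1n_value a2 c2 d2 (k - 1)) (E 1 0) (2, k - 2) = - E1n_value a2 c2 d2 (k - 1) (1, k - 2)"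
    using br_E10_right[of k _ 2 "k - 2"] k by (simp; arith)
  moreover have "E1n_value a2 c2 d2 (k - 1) (1, k - 2)
      = d2 * real (k - 1) * (real (k - 1) - 1) / 2 + (real (k - 1) - 1) * a2"
    using k by (simp add: E1n_value_def numeral_2_eq_2)
  ultimately show ?thesis using k by simp
qed

lemma matrices_zero: "a1 = 0" "b1 = 0" "c1 = 0" "d1 = 0" "a2 = 0" "b2 = 0" "c2 = 0" "d2 = 0"
proof -
  have K: "2 < real k" using k by simp
  have "En1_value a1 b1 d1 k (k - 1, 1) = 0" "En1_value a1 b1 d1 k (k - 2, 2) = 0"
    "E1n_value a2 c2 d2 k (1, k - 1) = 0" "E1n_value a2 c2 d2 k (2, k - 2) = 0"
    using En1_value_top E1n_value_top by simp_all
  then have top: "a1 * real k * (real k - 1) / 2 + (real k - 1) * d1 = 0"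
      "b1 * (real k - 1) * (real k - 2) / 2 = 0"
      "d2 * real k * (real k - 1) / 2 + (real k - 1) * a2 = 0"
      "c2 * (real k - 1) * (real k - 2) / 2 = 0"
    using k by (simp_all add: En1_value_def E1n_value_def)
  have "a1 * (real k - 1) * (real k - 2) / 2 + 2 * (real k - 2) * d1 = 0"
    using top_cross_En1 d1_eq_b2 by (simp add: algebra_simps)
  then show "a1 = 0" "d1 = 0" using top_system_trivial[OF K top(1)] by simp_all
  have "d2 * (real k - 1) * (real k - 2) / 2 + 2 * (real k - 2) * a2 = 0"
    using top_cross_E1n c1_eq_a2 by (simp add: algebra_simps)
  then show "d2 = 0" "a2 = 0" using top_system_trivial[OF K top(3)] by simp_all
  show "b1 = 0" "c2 = 0" using top(2,4) K by simp_all
  show "b2 = 0" "c1 = 0"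
    using \<open>d1 = 0\<close> \<open>a2 = 0\<close> d1_eq_b2 c1_eq_a2 by simp_all
qed

end

lemma is_zero_if_act_zero:
  "inG k X (int p) \<Longrightarrow> (\<And>j y. j \<in> {1..k} \<Longrightarrow> y \<in> hom k j \<Longrightarrow> is_zero k (act k X j y)) \<Longrightarrow> is_zero k X"
  by (cases X) (auto simp: act_def)

lemma Der_is_zero_if_zero_on_E:
  assumes X: "inG k (Der p f) (int p)" and "1 \<le> k"
    and "is_zero k (f 1 (E 1 0))" "is_zero k (f 1 (E 0 1))"
  shows "is_zero k (Der p f)"
proof (rule Der_is_zero_if_zero_on_hom1[OF X], intro ballI)
  fix x assume x: "x \<in> hom k 1"
  have k1: "1 \<in> {1..k}" using assms by simp
  have "lin_cond k f" using X by simp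
  from lin_condD[OF this k1 E10_hom E01_hom, of "x (1,0)" "x (0,1)"]
  have "peq k (f 1 x) (padd (psmul (x (1,0)) (f 1 (E 1 0))) (psmul (x (0,1)) (f 1 (E 0 1))))"
    using hom1_eq_lincomb_E[OF x] by simp
  moreover have "is_zero k (padd (psmul (x (1,0)) (f 1 (E 1 0))) (psmul (x (0,1)) (f 1 (E 0 1))))"
    using is_zero_lincomb inG_DerD[OF X k1 E10_hom] inG_DerD[OF X k1 E01_hom] assms by blast
  ultimately show "is_zero k (f 1 x)" by (rule peq_is_zero)
qed

theorem g1_zero:
  assumes k: "4 \<le> k" and X: "inG k X 1"
  shows "is_zero k X"
proof -
  obtain f where f: "X = Der 1 f" using inG_nonnegE[of k X 1] X by auto
  have X': "inG k (Der 1 f) (int 1)" using X f by simp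
  have k1: "1 \<in> {1..k}" and "1 \<le> k" using k by auto
  have "inG k (f 1 (E 1 0)) 0" "inG k (f 1 (E 0 1)) 0"
    using inG_DerD[OF X' k1 E10_hom] inG_DerD[OF X' k1 E01_hom] by simp_all
  then obtain a1 b1 c1 d1 a2 b2 c2 d2 where
    "\<And>j y. j \<in> {1..k} \<Longrightarrow> y \<in> hom k j \<Longrightarrow> act k (f 1 (E 1 0)) j y = Neg (mat_der a1 b1 c1 d1 y)"
    "\<And>j y. j \<in> {1..k} \<Longrightarrow> y \<in> hom k j \<Longrightarrow> act k (f 1 (E 0 1)) j y = Neg (mat_der a2 b2 c2 d2 y)"
    using inG_g0_eq_mat_der \<open>1 \<le> k\<close> by metis
  then interpret g1_element k f a1 b1 c1 d1 a2 b2 c2 d2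
    using k X' by unfold_locales
  have M0: "mat_der 0 0 0 0 y = (\<lambda>_. 0)" for y by (simp add: mat_der_def fun_eq_iff)
  have "is_zero k (f 1 (E 1 0))"
  proof (rule is_zero_if_act_zero[of k _ 0])
    fix j y assume "j \<in> {1..k}" "y \<in> hom k j"
    from act_E10[OF this] show "is_zero k (act k (f 1 (E 1 0)) j y)" unfolding matrices_zero M0 by simp
  qed (use \<open>inG k (f 1 (E 1 0)) 0\<close> in simp)
  moreover have "is_zero k (f 1 (E 0 1))"
  proof (rule is_zero_if_act_zero[of k _ 0])
    fix j y assume "j \<in> {1..k}" "y \<in> hom k j"
    from act_E01[OF this] show "is_zero k (act k (f 1 (E 0 1)) j y)" unfolding matrices_zero M0 by simp
  qed (use \<open>inG k (f 1 (E 0 1)) 0\<close> in simp)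
  ultimately show ?thesis unfolding f by (rule Der_is_zero_if_zero_on_E[OF X' \<open>1 \<le> k\<close>])
qed

theorem positive_degree_zero:
  assumes k: "4 \<le> k" and p: "1 \<le> p" and X: "inG k X (int p)"
  shows "is_zero k X"
  using p X
proof (induction p arbitrary: X rule: nat_induct_at_least)
  case base
  then show ?case using g1_zero[OF k] by simp
next
  case (Suc n)
  obtain f where f: "X = Der (Suc n) f" using inG_nonnegE[OF Suc.prems] .
  have "is_zero k (f 1 x)" if "x \<in> hom k 1" for x
    using inG_DerD[of k "Suc n" f 1 x] Suc.IH Suc.prems k that unfolding f by simp
  then show ?case using Der_is_zero_if_zero_on_hom1[of k "Suc n" f] Suc.prems unfolding f by simp
qed

theorem theorem6:
  fixes k :: nat
  assumes "k > 3"
  shows "(\<forall>p::nat. p \<ge> 1 \<longrightarrow> (\<forall>X. inG k X (int p) \<longrightarrow> is_zero k X))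
       \<and> (\<forall>A. endo1 k A \<longrightarrow> (\<exists>X. inG k X 0 \<and> (\<forall>x\<in>hom k 1. peq k (act k X 1 x) (Neg (A x)))))
       \<and> (\<forall>X Y. inG k X 0 \<and> inG k Y 0 \<and> (\<forall>x\<in>hom k 1. peq k (act k X 1 x) (act k Y 1 x))
              \<longrightarrow> peq k X Y)"
  using positive_degree_zero[of k] g0_realizes_endo1[of k] g0_determined_by_hom1[of k] assms
  by simp

end
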